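(* $\widetilde{\mathbb{R}}$ and $\widetilde{\mathbb{R}}_{sm}$ are reduced normal $f$-rings.
   Context: Let $I=(0,1]$. $\widetilde{\mathbb{R}}=\mathcal{E}_M/\mathcal{N}$ with $\mathcal{E}_M=\{(r_\varepsilon)\in\mathbb{R}^I:\exists N: |r_\varepsilon|=O(\varepsilon^{-N})\}$, $\mathcal{N}=\{(r_\varepsilon)\in\mathbb{R}^I:\forall m: |r_\varepsilon|=O(\varepsilon^m)\}$; $\widetilde{\mathbb{R}}_{sm}$ (resp. $\widetilde{\mathbb{R}}_{co}$) is defined in the same way using only nets with $\varepsilon\mapsto r_\varepsilon$ smooth (resp. continuous), and the natural map $\tau_{sm}:\widetilde{\mathbb{R}}_{sm}\to\widetilde{\mathbb{R}}_{co}$ is a ring isomorphism. Order: $r\le s$ iff there are representatives with $r_\varepsilon\le s_\varepsilon$ for all $\varepsilon$; lattice operations are given by componentwise $\max$, $\min$ of representatives (in $\widetilde{\mathbb{R}}_{sm}$ transported via $\tau_{sm}^{-1}$ from $\widetilde{\mathbb{R}}_{co}$). A ring is reduced if it has no nonzero nilpotents. An $f$-ring is a commutative ring with 1 which is a lattice-ordered ring such that $(r\wedge s)t=rt\wedge st$ whenever $t\ge0$. A reduced commutative $f$-ring $R$ with 1 is normal if for all $r,s\in R$ with $rs=0$ one has $R=\mathrm{Ann}(r)+\mathrm{Ann}(s)$, where $\mathrm{Ann}(r)=\{t\in R: rt=0\}$. *)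

theory Defs
  imports "HOL-Analysis.Analysis" "HOL-Library.Landau_Symbols" "HOL-Algebra.Ring"
begin

text \<open>Nets are modelled as functions real => real; only their values on I = (0,1]
  matter (for the quotient only the behaviour as eps -> 0+ matters).\<close>

definition I :: "real set" where "I = {0<..1}"

definition moderate :: "(real \<Rightarrow> real) \<Rightarrow> bool" where
  "moderate r \<longleftrightarrow> (\<exists>N::nat. r \<in> O[at_right 0](\<lambda>\<epsilon>. inverse (\<epsilon> ^ N)))"

definition negligible :: "(real \<Rightarrow> real) \<Rightarrow> bool" where
  "negligible r \<longleftrightarrow> (\<forall>m::nat. r \<in> O[at_right 0](\<lambda>\<epsilon>. \<epsilon> ^ m))"

definition smooth_net :: "(real \<Rightarrow> real) \<Rightarrow> bool" where
  "smooth_net r \<longleftrightarrow> (\<exists>D :: nat \<Rightarrow> real \<Rightarrow> real. D 0 = r \<and>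
      (\<forall>k. \<forall>x\<in>I. (D k has_real_derivative D (Suc k) x) (at x within I)))"

definition cont_net :: "(real \<Rightarrow> real) \<Rightarrow> bool" where
  "cont_net r \<longleftrightarrow> continuous_on I r"

definition all_net :: "(real \<Rightarrow> real) \<Rightarrow> bool" where
  "all_net r \<longleftrightarrow> True"

definition EM :: "((real \<Rightarrow> real) \<Rightarrow> bool) \<Rightarrow> (real \<Rightarrow> real) set" where
  "EM P = {r. P r \<and> moderate r}"

definition nrel :: "((real \<Rightarrow> real) \<Rightarrow> bool) \<Rightarrow> ((real \<Rightarrow> real) \<times> (real \<Rightarrow> real)) set" where
  "nrel P = {(r, s). r \<in> EM P \<and> s \<in> EM P \<and> negligible (\<lambda>\<epsilon>. r \<epsilon> - s \<epsilon>)}"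

definition cls :: "((real \<Rightarrow> real) \<Rightarrow> bool) \<Rightarrow> (real \<Rightarrow> real) \<Rightarrow> (real \<Rightarrow> real) set" where
  "cls P r = nrel P `` {r}"

definition rep :: "(real \<Rightarrow> real) set \<Rightarrow> (real \<Rightarrow> real)" where
  "rep A = (SOME r. r \<in> A)"

definition gen_ring :: "((real \<Rightarrow> real) \<Rightarrow> bool) \<Rightarrow> (real \<Rightarrow> real) set ring" where
  "gen_ring P = \<lparr> carrier = EM P // nrel P,
      monoid.mult = (\<lambda>A B. cls P (\<lambda>\<epsilon>. rep A \<epsilon> * rep B \<epsilon>)),
      one = cls P (\<lambda>_. 1),
      zero = cls P (\<lambda>_. 0),
      add = (\<lambda>A B. cls P (\<lambda>\<epsilon>. rep A \<epsilon> + rep B \<epsilon>)) \<rparr>"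

definition gen_le :: "((real \<Rightarrow> real) \<Rightarrow> bool) \<Rightarrow> (real \<Rightarrow> real) set \<Rightarrow> (real \<Rightarrow> real) set \<Rightarrow> bool" where
  "gen_le P A B \<longleftrightarrow> (\<exists>r\<in>A. \<exists>s\<in>B. \<forall>\<epsilon>\<in>I. r \<epsilon> \<le> s \<epsilon>)"

definition gen_meet :: "((real \<Rightarrow> real) \<Rightarrow> bool) \<Rightarrow> (real \<Rightarrow> real) set \<Rightarrow> (real \<Rightarrow> real) set \<Rightarrow> (real \<Rightarrow> real) set" where
  "gen_meet P A B = cls P (\<lambda>\<epsilon>. min (rep A \<epsilon>) (rep B \<epsilon>))"

definition gen_join :: "((real \<Rightarrow> real) \<Rightarrow> bool) \<Rightarrow> (real \<Rightarrow> real) set \<Rightarrow> (real \<Rightarrow> real) set \<Rightarrow> (real \<Rightarrow> real) set" where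
  "gen_join P A B = cls P (\<lambda>\<epsilon>. max (rep A \<epsilon>) (rep B \<epsilon>))"

definition Rt :: "(real \<Rightarrow> real) set ring" where "Rt = gen_ring all_net"
definition Rco :: "(real \<Rightarrow> real) set ring" where "Rco = gen_ring cont_net"
definition Rsm :: "(real \<Rightarrow> real) set ring" where "Rsm = gen_ring smooth_net"

definition le_t where "le_t = gen_le all_net"
definition meet_t where "meet_t = gen_meet all_net"
definition join_t where "join_t = gen_join all_net"

definition le_sm where "le_sm = gen_le smooth_net"

definition tau_sm :: "(real \<Rightarrow> real) set \<Rightarrow> (real \<Rightarrow> real) set" where
  "tau_sm A = cls cont_net (rep A)"

definition meet_sm where
  "meet_sm A B = the_inv_into (carrier Rsm) tau_sm (gen_meet cont_net (tau_sm A) (tau_sm B))"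

definition join_sm where
  "join_sm A B = the_inv_into (carrier Rsm) tau_sm (gen_join cont_net (tau_sm A) (tau_sm B))"

definition lattice_ordered_ring ::
  "('a, 'b) ring_scheme \<Rightarrow> ('a \<Rightarrow> 'a \<Rightarrow> bool) \<Rightarrow> ('a \<Rightarrow> 'a \<Rightarrow> 'a) \<Rightarrow> ('a \<Rightarrow> 'a \<Rightarrow> 'a) \<Rightarrow> bool" where
  "lattice_ordered_ring R leq mt jn \<longleftrightarrow> ring R \<and>
     (\<forall>x\<in>carrier R. leq x x) \<and>
     (\<forall>x\<in>carrier R. \<forall>y\<in>carrier R. leq x y \<and> leq y x \<longrightarrow> x = y) \<and>
     (\<forall>x\<in>carrier R. \<forall>y\<in>carrier R. \<forall>z\<in>carrier R. leq x y \<and> leq y z \<longrightarrow> leq x z) \<and>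
     (\<forall>x\<in>carrier R. \<forall>y\<in>carrier R. \<forall>z\<in>carrier R. leq x y \<longrightarrow> leq (x \<oplus>\<^bsub>R\<^esub> z) (y \<oplus>\<^bsub>R\<^esub> z)) \<and>
     (\<forall>x\<in>carrier R. \<forall>y\<in>carrier R. leq \<zero>\<^bsub>R\<^esub> x \<and> leq \<zero>\<^bsub>R\<^esub> y \<longrightarrow> leq \<zero>\<^bsub>R\<^esub> (x \<otimes>\<^bsub>R\<^esub> y)) \<and>
     (\<forall>x\<in>carrier R. \<forall>y\<in>carrier R. mt x y \<in> carrier R \<and> leq (mt x y) x \<and> leq (mt x y) y \<and>
        (\<forall>z\<in>carrier R. leq z x \<and> leq z y \<longrightarrow> leq z (mt x y))) \<and>
     (\<forall>x\<in>carrier R. \<forall>y\<in>carrier R. jn x y \<in> carrier R \<and> leq x (jn x y) \<and> leq y (jn x y) \<and>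
        (\<forall>z\<in>carrier R. leq x z \<and> leq y z \<longrightarrow> leq (jn x y) z))"

definition f_ring ::
  "('a, 'b) ring_scheme \<Rightarrow> ('a \<Rightarrow> 'a \<Rightarrow> bool) \<Rightarrow> ('a \<Rightarrow> 'a \<Rightarrow> 'a) \<Rightarrow> ('a \<Rightarrow> 'a \<Rightarrow> 'a) \<Rightarrow> bool" where
  "f_ring R leq mt jn \<longleftrightarrow> cring R \<and> lattice_ordered_ring R leq mt jn \<and>
     (\<forall>r\<in>carrier R. \<forall>s\<in>carrier R. \<forall>t\<in>carrier R. leq \<zero>\<^bsub>R\<^esub> t \<longrightarrow>
        mt r s \<otimes>\<^bsub>R\<^esub> t = mt (r \<otimes>\<^bsub>R\<^esub> t) (s \<otimes>\<^bsub>R\<^esub> t))"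

definition reduced_ring :: "('a, 'b) ring_scheme \<Rightarrow> bool" where
  "reduced_ring R \<longleftrightarrow> (\<forall>x\<in>carrier R. \<forall>n::nat. x [^]\<^bsub>R\<^esub> n = \<zero>\<^bsub>R\<^esub> \<longrightarrow> x = \<zero>\<^bsub>R\<^esub>)"

definition Ann :: "('a, 'b) ring_scheme \<Rightarrow> 'a \<Rightarrow> 'a set" where
  "Ann R r = {t \<in> carrier R. r \<otimes>\<^bsub>R\<^esub> t = \<zero>\<^bsub>R\<^esub>}"

definition normal_ring :: "('a, 'b) ring_scheme \<Rightarrow> bool" where
  "normal_ring R \<longleftrightarrow> (\<forall>r\<in>carrier R. \<forall>s\<in>carrier R. r \<otimes>\<^bsub>R\<^esub> s = \<zero>\<^bsub>R\<^esub> \<longrightarrow>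
      carrier R = {a \<oplus>\<^bsub>R\<^esub> b | a b. a \<in> Ann R r \<and> b \<in> Ann R s})"

definition reduced_normal_f_ring ::
  "('a, 'b) ring_scheme \<Rightarrow> ('a \<Rightarrow> 'a \<Rightarrow> bool) \<Rightarrow> ('a \<Rightarrow> 'a \<Rightarrow> 'a) \<Rightarrow> ('a \<Rightarrow> 'a \<Rightarrow> 'a) \<Rightarrow> bool" where
  "reduced_normal_f_ring R leq mt jn \<longleftrightarrow>
     f_ring R leq mt jn \<and> reduced_ring R \<and> normal_ring R"

end

theory Submission
  imports Defs "HOL-Real_Asymp.Real_Asymp"
begin

text \<open>Both rings are quotients \<open>E\<^sub>M(P)/N(P)\<close> for a class \<open>P\<close> of nets closed under
  constants, sums and products, so every claim becomes an estimate on representatives modulo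
  negligible nets. Reducedness holds because \<open>a\<^sup>n\<close> negligible forces \<open>a\<close> negligible.
  Normality: with the flat net \<open>\<delta>(\<epsilon>) = exp(-1/\<epsilon>)\<close> and
  \<open>\<chi> = (b\<^sup>2 + \<delta>) / (a\<^sup>2 + b\<^sup>2 + 2\<delta>)\<close>, any \<open>t\<close> splits as \<open>t\<chi> + t(1 - \<chi>)\<close>, and
  \<open>|a\<chi>| \<le> \<surd>|ab| + \<surd>\<delta>\<close> makes \<open>a\<chi>\<close> (and symmetrically \<open>b(1 - \<chi>)\<close>) negligible when \<open>ab\<close> is.
  For the order, \<open>A \<le> B\<close> iff the positive part of \<open>a - b\<close> is negligible, as soon as the
  pointwise maximum of two nets in \<open>P\<close> can be approximated from above inside \<open>P\<close> up to a
  negligible error; then all lattice and \<open>f\<close>-ring laws reduce to pointwise inequalities. For smooth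
  nets the approximation is \<open>(a + b + \<surd>((a - b)\<^sup>2 + \<delta>)) / 2\<close>, and the meet and join of
  \<open>R\<^sub>s\<^sub>m\<close>, transported from \<open>R\<^sub>c\<^sub>o\<close>, are represented by the analogous smooth
  approximations of \<open>min\<close> and \<open>max\<close>.\<close>

section \<open>Negligible and moderate nets\<close>

lemma eventually_in_I: "\<forall>\<^sub>F x in at_right 0. x \<in> I"
  unfolding I_def eventually_at_right_field by (intro exI[of _ 1]) auto

lemma negligible_iff_eventually_le:
  "negligible f \<longleftrightarrow> (\<forall>m. \<forall>\<^sub>F x in at_right 0. \<bar>f x\<bar> \<le> x ^ m)"
proof
  assume f: "negligible f"
  show "\<forall>m. \<forall>\<^sub>F x in at_right 0. \<bar>f x\<bar> \<le> x ^ m"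
  proof
    fix m
    have "(\<lambda>x::real. x ^ Suc m) \<in> o[at_right 0](\<lambda>x. x ^ m)" by real_asymp
    with f have "f \<in> o[at_right 0](\<lambda>x. x ^ m)"
      unfolding negligible_def by (blast intro: landau_o.big_small_trans)
    from landau_o.smallD[OF this zero_less_one] eventually_in_I
    show "\<forall>\<^sub>F x in at_right 0. \<bar>f x\<bar> \<le> x ^ m"
      by eventually_elim (simp add: I_def)
  qed
next
  assume f: "\<forall>m. \<forall>\<^sub>F x in at_right 0. \<bar>f x\<bar> \<le> x ^ m"
  show "negligible f"
    unfolding negligible_def
  proof (intro allI landau_o.big_mono)
    fix m
    show "\<forall>\<^sub>F x in at_right 0. norm (f x) \<le> norm (x ^ m)"
      using f[rule_format, of m] eventually_in_I by eventually_elim (simp add: I_def)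
  qed
qed

lemma negligible_mono:
  assumes "negligible g" "\<forall>\<^sub>F x in at_right 0. \<bar>f x\<bar> \<le> \<bar>g x\<bar>"
  shows "negligible f"
proof -
  have "f \<in> O[at_right 0](g)" using assms(2) by (intro landau_o.big_mono) simp
  then show ?thesis using assms(1) unfolding negligible_def by (blast intro: landau_o.big_trans)
qed

lemma negligible_mono_on_I:
  assumes "negligible g" "\<And>x. x \<in> I \<Longrightarrow> \<bar>f x\<bar> \<le> g x"
  shows "negligible f"
proof (rule negligible_mono[OF assms(1)])
  show "\<forall>\<^sub>F x in at_right 0. \<bar>f x\<bar> \<le> \<bar>g x\<bar>"
    using eventually_in_I by eventually_elim (use assms(2) in fastforce)
qed

lemma moderate_mono:
  assumes "moderate g" "\<forall>\<^sub>F x in at_right 0. \<bar>f x\<bar> \<le> \<bar>g x\<bar>"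
  shows "moderate f"
proof -
  have "f \<in> O[at_right 0](g)" using assms(2) by (intro landau_o.big_mono) simp
  then show ?thesis using assms(1) unfolding moderate_def by (blast intro: landau_o.big_trans)
qed

lemma negligible_zero: "negligible (\<lambda>_. 0)"
  by (simp add: negligible_def)

lemma negligible_add: "negligible f \<Longrightarrow> negligible g \<Longrightarrow> negligible (\<lambda>x. f x + g x)"
  and negligible_diff: "negligible f \<Longrightarrow> negligible g \<Longrightarrow> negligible (\<lambda>x. f x - g x)"
  by (simp_all add: negligible_def sum_in_bigo)

lemma negligible_minus: "negligible (\<lambda>x. - f x) \<longleftrightarrow> negligible f"
  and negligible_abs: "negligible (\<lambda>x. \<bar>f x\<bar>) \<longleftrightarrow> negligible f"
  by (simp_all add: negligible_def)

lemma moderate_const: "moderate (\<lambda>_. c)"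
  unfolding moderate_def by (intro exI[of _ 0]) simp

lemma negligible_imp_moderate: "negligible f \<Longrightarrow> moderate f"
  unfolding negligible_def moderate_def by (intro exI[of _ 0]) (auto elim: allE[of _ 0])

lemma inverse_power_bigo_inverse_power:
  assumes "N \<le> M"
  shows "(\<lambda>x::real. inverse (x ^ N)) \<in> O[at_right 0](\<lambda>x. inverse (x ^ M))"
proof (rule landau_o.big_mono)
  show "\<forall>\<^sub>F x in at_right 0. norm (inverse (x ^ N)) \<le> norm (inverse ((x::real) ^ M))"
    using eventually_in_I
    by eventually_elim (use assms in \<open>auto simp: I_def intro!: le_imp_inverse_le power_decreasing\<close>)
qed

lemma moderate_add: "moderate f \<Longrightarrow> moderate g \<Longrightarrow> moderate (\<lambda>x. f x + g x)"
proof -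
  assume "moderate f" "moderate g"
  then obtain N M where f: "f \<in> O[at_right 0](\<lambda>x. inverse (x ^ N))"
    and g: "g \<in> O[at_right 0](\<lambda>x. inverse (x ^ M))" unfolding moderate_def by blast
  have "(\<lambda>x::real. inverse (x ^ N)) \<in> O[at_right 0](\<lambda>x. inverse (x ^ (N + M)))"
    "(\<lambda>x::real. inverse (x ^ M)) \<in> O[at_right 0](\<lambda>x. inverse (x ^ (N + M)))"
    by (simp_all add: inverse_power_bigo_inverse_power)
  with f g show ?thesis
    unfolding moderate_def by (blast intro: sum_in_bigo landau_o.big_trans)
qed

lemma moderate_mult: "moderate f \<Longrightarrow> moderate g \<Longrightarrow> moderate (\<lambda>x. f x * g x)"
proof -
  assume "moderate f" "moderate g"
  then obtain N M where "f \<in> O[at_right 0](\<lambda>x. inverse (x ^ N))"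
    and "g \<in> O[at_right 0](\<lambda>x. inverse (x ^ M))" unfolding moderate_def by blast
  from landau_o.big_mult[OF this] show ?thesis
    unfolding moderate_def by (intro exI[of _ "N + M"]) (simp add: power_add)
qed

lemma moderate_minus: "moderate (\<lambda>x. - f x) \<longleftrightarrow> moderate f"
  and moderate_abs: "moderate (\<lambda>x. \<bar>f x\<bar>) \<longleftrightarrow> moderate f"
  by (simp_all add: moderate_def)

lemma moderate_diff: "moderate f \<Longrightarrow> moderate g \<Longrightarrow> moderate (\<lambda>x. f x - g x)"
  using moderate_add[of f "\<lambda>x. - g x"] by (simp add: moderate_minus)

lemma negligible_mult_moderate:
  assumes "negligible f" "moderate g"
  shows "negligible (\<lambda>x. f x * g x)"
  unfolding negligible_def
proof
  fix m
  obtain N where "g \<in> O[at_right 0](\<lambda>x. inverse (x ^ N))"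
    using assms(2) unfolding moderate_def by blast
  moreover have "f \<in> O[at_right 0](\<lambda>x. x ^ (m + N))"
    using assms(1) unfolding negligible_def by blast
  moreover have "(\<lambda>x::real. x ^ (m + N) * inverse (x ^ N)) \<in> O[at_right 0](\<lambda>x. x ^ m)"
    by real_asymp
  ultimately show "(\<lambda>x. f x * g x) \<in> O[at_right 0](\<lambda>x. x ^ m)"
    by (blast intro: landau_o.big_mult landau_o.big_trans)
qed

lemma negligible_power_imp_negligible:
  assumes "negligible (\<lambda>x. f x ^ Suc n)"
  shows "negligible f"
  unfolding negligible_iff_eventually_le
proof
  fix m
  show "\<forall>\<^sub>F x in at_right 0. \<bar>f x\<bar> \<le> x ^ m"
    using assms[unfolded negligible_iff_eventually_le, rule_format, of "m * Suc n"] eventually_in_I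
  proof eventually_elim
    case (elim x)
    then have "\<bar>f x\<bar> ^ Suc n \<le> (x ^ m) ^ Suc n"
      by (simp only: power_abs power_mult)
    then show ?case
      by (rule power_le_imp_le_base) (use elim(2) in \<open>simp add: I_def\<close>)
  qed
qed

lemma negligible_sqrt_abs:
  assumes "negligible f"
  shows "negligible (\<lambda>x. sqrt \<bar>f x\<bar>)"
  unfolding negligible_iff_eventually_le
proof
  fix m
  show "\<forall>\<^sub>F x in at_right 0. \<bar>sqrt \<bar>f x\<bar>\<bar> \<le> x ^ m"
    using assms[unfolded negligible_iff_eventually_le, rule_format, of "2 * m"] eventually_in_I
  proof eventually_elim
    case (elim x)
    then have "sqrt \<bar>f x\<bar> \<le> sqrt ((x ^ m)\<^sup>2)"
      by (simp add: power_mult[symmetric] mult.commute)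
    then show ?case using elim(2) by (simp add: I_def)
  qed
qed

lemma moderate_min:
  assumes "moderate f" "moderate g"
  shows "moderate (\<lambda>x. min (f x) (g x))"
proof (rule moderate_mono)
  show "moderate (\<lambda>x. \<bar>f x\<bar> + \<bar>g x\<bar>)" using assms by (simp add: moderate_add moderate_abs)
  show "\<forall>\<^sub>F x in at_right 0. \<bar>min (f x) (g x)\<bar> \<le> \<bar>\<bar>f x\<bar> + \<bar>g x\<bar>\<bar>"
    by (intro always_eventually allI) (auto simp: min_def)
qed

lemma moderate_max:
  assumes "moderate f" "moderate g"
  shows "moderate (\<lambda>x. max (f x) (g x))"
proof (rule moderate_mono)
  show "moderate (\<lambda>x. \<bar>f x\<bar> + \<bar>g x\<bar>)" using assms by (simp add: moderate_add moderate_abs)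
  show "\<forall>\<^sub>F x in at_right 0. \<bar>max (f x) (g x)\<bar> \<le> \<bar>\<bar>f x\<bar> + \<bar>g x\<bar>\<bar>"
    by (intro always_eventually allI) (auto simp: max_def)
qed

lemma not_negligible_one: "\<not> negligible (\<lambda>_. 1)"
proof
  assume "negligible (\<lambda>_. 1)"
  from this[unfolded negligible_iff_eventually_le, rule_format, of 1]
  have "\<forall>\<^sub>F x in at_right 0. 1 \<le> (x::real)" by simp
  moreover have "\<forall>\<^sub>F x in at_right (0::real). x < 1"
    unfolding eventually_at_right_field by (intro exI[of _ 1]) auto
  ultimately have "\<forall>\<^sub>F x in at_right (0::real). False"
    by eventually_elim simp
  then show False by simp
qed

lemma negligible_mono_nonneg:
  assumes "negligible g" "\<And>x. 0 \<le> f x" "\<And>x. f x \<le> g x"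
  shows "negligible f"
proof (rule negligible_mono[OF assms(1)], intro always_eventually allI)
  fix x
  show "\<bar>f x\<bar> \<le> \<bar>g x\<bar>" using assms(2,3)[of x] by simp
qed

lemma negligible_pos_part_le_sum:
  assumes "negligible (\<lambda>x. max 0 (f x))" "negligible (\<lambda>x. max 0 (g x))"
    and "\<And>x. max 0 (h x) \<le> max 0 (f x) + max 0 (g x)"
  shows "negligible (\<lambda>x. max 0 (h x))"
  by (rule negligible_mono_nonneg[OF negligible_add[OF assms(1,2)]]) (simp, rule assms(3))

lemma negligible_pos_part_mono:
  assumes "negligible (\<lambda>x. max 0 (f x))" "\<And>x. h x \<le> f x"
  shows "negligible (\<lambda>x. max 0 (h x))"
  by (rule negligible_mono_nonneg[OF assms(1)]) (simp_all add: assms(2) max.coboundedI2)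

lemma negligible_pos_part: "negligible f \<Longrightarrow> negligible (\<lambda>x. max 0 (f x))"
  by (erule negligible_mono) (intro always_eventually allI, simp)

definition negl_equiv :: "(real \<Rightarrow> real) \<Rightarrow> (real \<Rightarrow> real) \<Rightarrow> bool" (infix \<open>\<simeq>\<close> 50) where
  "f \<simeq> g \<longleftrightarrow> negligible (\<lambda>x. f x - g x)"

lemma negl_equiv_refl [simp]: "f \<simeq> f"
  by (simp add: negl_equiv_def negligible_zero)

lemma negl_equiv_sym: "f \<simeq> g \<Longrightarrow> g \<simeq> f"
  using negligible_minus[of "\<lambda>x. f x - g x"] by (simp add: negl_equiv_def)

lemma negl_equiv_trans [trans]: "f \<simeq> g \<Longrightarrow> g \<simeq> h \<Longrightarrow> f \<simeq> h"
  using negligible_add[of "\<lambda>x. f x - g x" "\<lambda>x. g x - h x"] by (simp add: negl_equiv_def)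

lemma negl_equiv_zero_iff: "f \<simeq> (\<lambda>_. 0) \<longleftrightarrow> negligible f"
  by (simp add: negl_equiv_def)

lemma negl_equiv_add:
  "f \<simeq> f' \<Longrightarrow> g \<simeq> g' \<Longrightarrow> (\<lambda>x. f x + g x) \<simeq> (\<lambda>x. f' x + g' x)"
  using negligible_add[of "\<lambda>x. f x - f' x" "\<lambda>x. g x - g' x"]
  by (simp add: negl_equiv_def algebra_simps)

lemma negl_equiv_mult:
  assumes "f \<simeq> f'" "g \<simeq> g'" "moderate f" "moderate g'"
  shows "(\<lambda>x. f x * g x) \<simeq> (\<lambda>x. f' x * g' x)"
proof -
  have "negligible (\<lambda>x. (g x - g' x) * f x + (f x - f' x) * g' x)"
    using assms unfolding negl_equiv_def by (intro negligible_add negligible_mult_moderate)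
  then show ?thesis by (simp add: negl_equiv_def algebra_simps)
qed

lemma negl_equiv_cmult: "f \<simeq> g \<Longrightarrow> (\<lambda>x. c * f x) \<simeq> (\<lambda>x. c * g x)"
  unfolding negl_equiv_def using negligible_mult_moderate[OF _ moderate_const, of "\<lambda>x. f x - g x" c]
  by (simp add: algebra_simps)

lemma negl_equiv_lipschitz:
  assumes op: "\<And>a b a' b'. \<bar>op a b - op a' b'\<bar> \<le> \<bar>a - a'\<bar> + \<bar>b - b'\<bar>"
    and "f \<simeq> f'" "g \<simeq> g'"
  shows "(\<lambda>x. op (f x) (g x)) \<simeq> (\<lambda>x. op (f' x) (g' x))"
  unfolding negl_equiv_def
proof (rule negligible_mono)
  show "negligible (\<lambda>x. \<bar>f x - f' x\<bar> + \<bar>g x - g' x\<bar>)"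
    using assms(2,3) unfolding negl_equiv_def by (intro negligible_add) (simp_all add: negligible_abs)
  show "\<forall>\<^sub>F x in at_right 0. \<bar>op (f x) (g x) - op (f' x) (g' x)\<bar> \<le> \<bar>\<bar>f x - f' x\<bar> + \<bar>g x - g' x\<bar>\<bar>"
    using op by (intro always_eventually allI) simp
qed

lemma min_lipschitz: "\<bar>min a b - min a' b'\<bar> \<le> \<bar>a - a'\<bar> + \<bar>b - b'\<bar>"
  and max_lipschitz: "\<bar>max a b - max a' b'\<bar> \<le> \<bar>a - a'\<bar> + \<bar>b - b'\<bar>" for a b a' b' :: real
  by (auto simp: min_def max_def abs_if)

lemma mem_nrel: "(r, s) \<in> nrel P \<longleftrightarrow> r \<in> EM P \<and> s \<in> EM P \<and> r \<simeq> s"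
  by (simp add: nrel_def negl_equiv_def)

lemma equiv_nrel: "equiv (EM P) (nrel P)"
proof (rule equivI)
  show "refl_on (EM P) (nrel P)"
    by (rule refl_onI) (auto simp: mem_nrel)
  show "sym (nrel P)"
    by (rule symI) (simp add: mem_nrel negl_equiv_sym)
  show "trans (nrel P)"
    by (rule transI) (auto simp: mem_nrel elim: negl_equiv_trans)
qed (auto simp: nrel_def)

lemma mem_cls: "s \<in> cls P r \<longleftrightarrow> r \<in> EM P \<and> s \<in> EM P \<and> r \<simeq> s"
  by (simp add: cls_def nrel_def negl_equiv_def)

lemma self_in_cls: "r \<in> EM P \<Longrightarrow> r \<in> cls P r"
  by (simp add: mem_cls)

lemma cls_in_quotient: "r \<in> EM P \<Longrightarrow> cls P r \<in> EM P // nrel P"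
  unfolding cls_def by (rule quotientI)

lemma cls_eq_iff: "r \<in> EM P \<Longrightarrow> s \<in> EM P \<Longrightarrow> cls P r = cls P s \<longleftrightarrow> r \<simeq> s"
  unfolding cls_def by (simp add: eq_equiv_class_iff[OF equiv_nrel] mem_nrel)

lemma quotient_eq_cls:
  assumes "A \<in> EM P // nrel P" "s \<in> A"
  shows "s \<in> EM P" "A = cls P s"
proof -
  from assms(1) obtain r where r: "r \<in> EM P" "A = nrel P `` {r}" by (auto elim!: quotientE)
  with assms(2) have "(r, s) \<in> nrel P" by simp
  then show "s \<in> EM P" "A = cls P s"
    using r(2) by (auto simp: mem_nrel cls_def intro!: equiv_class_eq[OF equiv_nrel])
qed

lemma quotient_negl_equiv: "A \<in> EM P // nrel P \<Longrightarrow> r \<in> A \<Longrightarrow> s \<in> A \<Longrightarrow> r \<simeq> s"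
  using quotient_eq_cls[of A P r] quotient_eq_cls[of A P s] cls_eq_iff[of r P s] by simp

lemma rep_in:
  assumes "A \<in> EM P // nrel P"
  shows "rep A \<in> A"
proof -
  from assms obtain r where "r \<in> EM P" "A = nrel P `` {r}" by (auto elim!: quotientE)
  then have "r \<in> A" using equiv_class_self[OF equiv_nrel] by simp
  then show ?thesis unfolding rep_def by (rule someI[where P = "\<lambda>r. r \<in> A"])
qed

lemma rep_EM: "A \<in> EM P // nrel P \<Longrightarrow> rep A \<in> EM P"
  and cls_rep: "A \<in> EM P // nrel P \<Longrightarrow> cls P (rep A) = A"
  using quotient_eq_cls[OF _ rep_in] by simp_all

lemma rep_cls: "r \<in> EM P \<Longrightarrow> rep (cls P r) \<simeq> r"
  using rep_in[OF cls_in_quotient, of r P] by (simp add: mem_cls negl_equiv_sym)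

section \<open>A partition of unity subordinate to a product\<close>

lemma min_abs_le_sqrt_abs_mult: "min \<bar>a\<bar> \<bar>b\<bar> \<le> sqrt \<bar>a * b\<bar>" for a b :: real
proof (rule real_le_rsqrt)
  have "min \<bar>a\<bar> \<bar>b\<bar> * min \<bar>a\<bar> \<bar>b\<bar> \<le> \<bar>a\<bar> * \<bar>b\<bar>"
    by (intro mult_mono) auto
  then show "(min \<bar>a\<bar> \<bar>b\<bar>)\<^sup>2 \<le> \<bar>a * b\<bar>"
    by (simp only: power2_eq_square abs_mult)
qed

lemma abs_mult_square_le: "\<bar>a\<bar> * b\<^sup>2 \<le> min \<bar>a\<bar> \<bar>b\<bar> * (a\<^sup>2 + b\<^sup>2)" for a b :: real
proof (cases "\<bar>a\<bar> \<le> \<bar>b\<bar>")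
  case True
  have "\<bar>a\<bar> * b\<^sup>2 \<le> \<bar>a\<bar> * (a\<^sup>2 + b\<^sup>2)"
    by (intro mult_left_mono) simp_all
  then show ?thesis using True by (simp add: min_def)
next
  case False
  have "\<bar>a\<bar> * b\<^sup>2 = \<bar>b\<bar> * (\<bar>a\<bar> * \<bar>b\<bar>)"
    by (metis abs_mult_self_eq mult.assoc mult.commute power2_eq_square)
  also have "\<dots> \<le> \<bar>b\<bar> * (\<bar>a\<bar> * \<bar>a\<bar>)"
    using False by (intro mult_left_mono) auto
  also have "\<dots> \<le> \<bar>b\<bar> * (a\<^sup>2 + b\<^sup>2)"
    by (intro mult_left_mono) (simp_all add: power2_eq_square)
  finally show ?thesis using False by (simp add: min_def)
qed

lemma abs_mult_le_sqrt_mult: "0 \<le> d \<Longrightarrow> \<bar>a\<bar> * d \<le> sqrt d * (a\<^sup>2 + d)" for a d :: real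
proof -
  assume d: "0 \<le> d"
  have "0 \<le> (\<bar>a\<bar> - sqrt d)\<^sup>2" by simp
  then have "2 * \<bar>a\<bar> * sqrt d \<le> a\<^sup>2 + d"
    using d by (simp add: power2_diff)
  moreover have "0 \<le> \<bar>a\<bar> * sqrt d" using d by simp
  ultimately have "\<bar>a\<bar> * sqrt d \<le> a\<^sup>2 + d" by linarith
  then have "\<bar>a\<bar> * sqrt d * sqrt d \<le> sqrt d * (a\<^sup>2 + d)"
    by (metis mult.commute mult_right_mono real_sqrt_ge_zero d)
  moreover have "\<bar>a\<bar> * sqrt d * sqrt d = \<bar>a\<bar> * d"
    using d by (simp add: mult.assoc)
  ultimately show ?thesis by simp
qed

text \<open>\<open>exp (-1/\<epsilon>)\<close> is positive, smooth and negligible: it keeps denominators positive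
  while changing nothing modulo negligible nets.\<close>

definition flat :: "real \<Rightarrow> real" where
  "flat x = exp (- inverse x)"

definition weight :: "(real \<Rightarrow> real) \<Rightarrow> (real \<Rightarrow> real) \<Rightarrow> real \<Rightarrow> real" where
  "weight r s x = (s x ^ 2 + flat x) / (r x ^ 2 + s x ^ 2 + 2 * flat x)"

lemma flat_pos: "flat x > 0"
  by (simp add: flat_def)

lemma negligible_flat: "negligible flat"
  unfolding flat_def negligible_def by (intro allI) real_asymp

lemma weight_denominator_pos: "r x ^ 2 + s x ^ 2 + 2 * flat x > 0"
  using flat_pos[of x] by (intro add_nonneg_pos) auto

lemma weight_nonneg: "0 \<le> weight r s x"
  unfolding weight_def using weight_denominator_pos[of r x s] flat_pos[of x]
  by (intro divide_nonneg_pos) auto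

lemma weight_le_one: "weight r s x \<le> 1"
  unfolding weight_def using weight_denominator_pos[of r x s] flat_pos[of x]
  by (subst divide_le_eq_1_pos) auto

lemma weight_sum: "weight r s x + weight s r x = 1"
proof -
  define D where "D = r x ^ 2 + s x ^ 2 + 2 * flat x"
  have "weight r s x + weight s r x = (s x ^ 2 + flat x) / D + (r x ^ 2 + flat x) / D"
    by (simp add: weight_def D_def add_ac)
  also have "\<dots> = D / D"
    by (simp only: add_divide_distrib[symmetric]) (simp add: D_def)
  also have "\<dots> = 1"
    using weight_denominator_pos[of r x s] by (simp add: D_def)
  finally show ?thesis .
qed

lemma abs_mult_weight_le:
  fixes a b d :: real
  assumes d: "d > 0"
  shows "\<bar>a * ((b\<^sup>2 + d) / (a\<^sup>2 + b\<^sup>2 + 2 * d))\<bar> \<le> sqrt \<bar>a * b\<bar> + sqrt d"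
proof -
  define D where "D = a\<^sup>2 + b\<^sup>2 + 2 * d"
  have D: "D > 0" "a\<^sup>2 + b\<^sup>2 \<le> D" "a\<^sup>2 + d \<le> D"
    using d by (auto simp: D_def add_nonneg_pos)
  have "min \<bar>a\<bar> \<bar>b\<bar> * (a\<^sup>2 + b\<^sup>2) \<le> sqrt \<bar>a * b\<bar> * D"
    using min_abs_le_sqrt_abs_mult D(2) by (intro mult_mono) simp_all
  with abs_mult_square_le have "\<bar>a\<bar> * b\<^sup>2 \<le> sqrt \<bar>a * b\<bar> * D"
    by (rule order_trans)
  moreover have "sqrt d * (a\<^sup>2 + d) \<le> sqrt d * D"
    using D(3) d by (intro mult_left_mono) simp_all
  with abs_mult_le_sqrt_mult d have "\<bar>a\<bar> * d \<le> sqrt d * D"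
    by (meson less_imp_le order_trans)
  ultimately have "\<bar>a\<bar> * b\<^sup>2 + \<bar>a\<bar> * d \<le> sqrt \<bar>a * b\<bar> * D + sqrt d * D"
    by (rule add_mono)
  then have "\<bar>a\<bar> * (b\<^sup>2 + d) / D \<le> (sqrt \<bar>a * b\<bar> + sqrt d) * D / D"
    using D(1) by (intro divide_right_mono) (simp_all only: distrib_left distrib_right)
  also have "\<dots> = sqrt \<bar>a * b\<bar> + sqrt d"
    using D(1) by simp
  also have "\<bar>a\<bar> * (b\<^sup>2 + d) / D = \<bar>a * ((b\<^sup>2 + d) / D)\<bar>"
    using D(1) d by (simp add: abs_mult abs_divide add_nonneg_pos)
  finally show ?thesis by (simp only: D_def)
qed

lemma negligible_mult_weight:
  assumes "negligible (\<lambda>x. r x * s x)"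
  shows "negligible (\<lambda>x. r x * weight r s x)"
proof (rule negligible_mono)
  show "negligible (\<lambda>x. sqrt \<bar>r x * s x\<bar> + sqrt \<bar>flat x\<bar>)"
    using assms negligible_flat by (intro negligible_add negligible_sqrt_abs)
  show "\<forall>\<^sub>F x in at_right 0. \<bar>r x * weight r s x\<bar> \<le> \<bar>sqrt \<bar>r x * s x\<bar> + sqrt \<bar>flat x\<bar>\<bar>"
  proof (intro always_eventually allI)
    fix x
    have "\<bar>r x * weight r s x\<bar> \<le> sqrt \<bar>r x * s x\<bar> + sqrt (flat x)"
      using abs_mult_weight_le[OF flat_pos, where a = "r x" and b = "s x"] unfolding weight_def .
    then show "\<bar>r x * weight r s x\<bar> \<le> \<bar>sqrt \<bar>r x * s x\<bar> + sqrt \<bar>flat x\<bar>\<bar>"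
      using flat_pos[of x] by simp
  qed
qed

lemma moderate_weight: "moderate (weight r s)"
proof (rule moderate_mono[OF moderate_const[of 1]])
  show "\<forall>\<^sub>F x in at_right 0. \<bar>weight r s x\<bar> \<le> \<bar>1\<bar>"
    using weight_nonneg weight_le_one by (intro always_eventually allI) simp
qed

section \<open>The quotient ring\<close>

locale net_algebra =
  fixes P :: "(real \<Rightarrow> real) \<Rightarrow> bool"
  assumes closed_const: "P (\<lambda>_. c)"
    and closed_add: "P f \<Longrightarrow> P g \<Longrightarrow> P (\<lambda>x. f x + g x)"
    and closed_mult: "P f \<Longrightarrow> P g \<Longrightarrow> P (\<lambda>x. f x * g x)"
begin

lemma EM_const: "(\<lambda>_. c) \<in> EM P"
  by (simp add: EM_def closed_const moderate_const)

lemma EM_add: "f \<in> EM P \<Longrightarrow> g \<in> EM P \<Longrightarrow> (\<lambda>x. f x + g x) \<in> EM P"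
  by (simp add: EM_def closed_add moderate_add)

lemma EM_mult: "f \<in> EM P \<Longrightarrow> g \<in> EM P \<Longrightarrow> (\<lambda>x. f x * g x) \<in> EM P"
  by (simp add: EM_def closed_mult moderate_mult)

lemma EM_minus: "f \<in> EM P \<Longrightarrow> (\<lambda>x. - f x) \<in> EM P"
  using EM_mult[OF EM_const[of "-1"]] by simp

lemma EM_diff: "f \<in> EM P \<Longrightarrow> g \<in> EM P \<Longrightarrow> (\<lambda>x. f x - g x) \<in> EM P"
  using EM_add[OF _ EM_minus] by simp

lemma EM_power: "f \<in> EM P \<Longrightarrow> (\<lambda>x. f x ^ n) \<in> EM P"
  by (induction n) (simp_all add: EM_const EM_mult)

lemma carrier_gen_ring: "carrier (gen_ring P) = EM P // nrel P"
  and zero_gen_ring: "\<zero>\<^bsub>gen_ring P\<^esub> = cls P (\<lambda>_. 0)"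
  and one_gen_ring: "\<one>\<^bsub>gen_ring P\<^esub> = cls P (\<lambda>_. 1)"
  by (simp_all add: gen_ring_def)

lemma add_cls:
  assumes "r \<in> EM P" "s \<in> EM P"
  shows "cls P r \<oplus>\<^bsub>gen_ring P\<^esub> cls P s = cls P (\<lambda>x. r x + s x)"
proof -
  have "(\<lambda>x. rep (cls P r) x + rep (cls P s) x) \<simeq> (\<lambda>x. r x + s x)"
    using assms by (intro negl_equiv_add rep_cls)
  then show ?thesis
    using assms by (simp add: gen_ring_def cls_eq_iff EM_add rep_EM cls_in_quotient)
qed

lemma mult_cls:
  assumes "r \<in> EM P" "s \<in> EM P"
  shows "cls P r \<otimes>\<^bsub>gen_ring P\<^esub> cls P s = cls P (\<lambda>x. r x * s x)"
proof -
  have "moderate (rep (cls P r))" "moderate s"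
    using assms rep_EM[OF cls_in_quotient] by (auto simp: EM_def)
  then have "(\<lambda>x. rep (cls P r) x * rep (cls P s) x) \<simeq> (\<lambda>x. r x * s x)"
    using assms by (intro negl_equiv_mult rep_cls)
  then show ?thesis
    using assms by (simp add: gen_ring_def cls_eq_iff EM_mult rep_EM cls_in_quotient)
qed

lemma cls_in_carrier [simp]: "r \<in> EM P \<Longrightarrow> cls P r \<in> carrier (gen_ring P)"
  by (simp add: carrier_gen_ring cls_in_quotient)

lemma gen_ring_carrierE:
  assumes "A \<in> carrier (gen_ring P)"
  obtains a where "a \<in> EM P" "A = cls P a"
  using assms rep_EM cls_rep unfolding carrier_gen_ring by metis

lemma cring_gen_ring: "cring (gen_ring P)"
proof (rule cringI)
  show "abelian_group (gen_ring P)"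
  proof (rule abelian_groupI)
    fix A assume "A \<in> carrier (gen_ring P)"
    then obtain a where a: "a \<in> EM P" "A = cls P a" by (rule gen_ring_carrierE)
    then have "cls P (\<lambda>x. - a x) \<oplus>\<^bsub>gen_ring P\<^esub> A = \<zero>\<^bsub>gen_ring P\<^esub>"
      by (simp add: add_cls EM_minus zero_gen_ring)
    then show "\<exists>B\<in>carrier (gen_ring P). B \<oplus>\<^bsub>gen_ring P\<^esub> A = \<zero>\<^bsub>gen_ring P\<^esub>"
      using a(1) by (intro bexI[of _ "cls P (\<lambda>x. - a x)"]) (simp_all add: EM_minus)
  qed (auto elim!: gen_ring_carrierE simp: zero_gen_ring add_cls EM_add EM_const add_ac)
  show "comm_monoid (gen_ring P)"
    by (rule comm_monoidI)
      (auto elim!: gen_ring_carrierE simp: one_gen_ring mult_cls EM_mult EM_const mult_ac)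
qed (auto elim!: gen_ring_carrierE simp: add_cls mult_cls EM_add EM_mult distrib_right)

lemma pow_cls: "r \<in> EM P \<Longrightarrow> cls P r [^]\<^bsub>gen_ring P\<^esub> n = cls P (\<lambda>x. r x ^ n)"
  by (induction n) (simp_all add: one_gen_ring mult_cls EM_power mult.commute)

lemma reduced_gen_ring: "reduced_ring (gen_ring P)"
  unfolding reduced_ring_def
proof (intro ballI allI impI)
  fix A and n :: nat
  assume A: "A \<in> carrier (gen_ring P)" and nil: "A [^]\<^bsub>gen_ring P\<^esub> n = \<zero>\<^bsub>gen_ring P\<^esub>"
  obtain a where a: "a \<in> EM P" "A = cls P a" using A by (rule gen_ring_carrierE)
  have "(\<lambda>x. a x ^ n) \<simeq> (\<lambda>_. 0)"
    using nil a by (simp add: pow_cls zero_gen_ring cls_eq_iff EM_power EM_const)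
  then have nil': "negligible (\<lambda>x. a x ^ n)" by (simp only: negl_equiv_zero_iff)
  then obtain k where "n = Suc k"
    using not_negligible_one by (cases n) auto
  with nil' have "negligible a"
    using negligible_power_imp_negligible by blast
  then have "a \<simeq> (\<lambda>_. 0)" by (simp only: negl_equiv_zero_iff)
  then have "cls P a = cls P (\<lambda>_. 0)"
    using a(1) EM_const cls_eq_iff by blast
  then show "A = \<zero>\<^bsub>gen_ring P\<^esub>"
    using a(2) by (simp only: zero_gen_ring)
qed

lemma cls_mult_weight_in_Ann:
  assumes "r \<in> EM P" "t \<in> EM P" "weight r s \<in> EM P" "negligible (\<lambda>x. r x * s x)"
  shows "cls P (\<lambda>x. t x * weight r s x) \<in> Ann (gen_ring P) (cls P r)"
proof -
  have "negligible (\<lambda>x. r x * weight r s x * t x)"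
    using assms by (intro negligible_mult_moderate[OF negligible_mult_weight]) (auto simp: EM_def)
  then have "(\<lambda>x. r x * (t x * weight r s x)) \<simeq> (\<lambda>_. 0)"
    by (simp add: negl_equiv_zero_iff mult_ac)
  then show ?thesis
    using assms unfolding Ann_def
    by (simp add: mult_cls EM_mult zero_gen_ring cls_eq_iff EM_const)
qed

lemma normal_gen_ring:
  assumes closed_weight: "\<And>r s. P r \<Longrightarrow> P s \<Longrightarrow> P (weight r s)"
  shows "normal_ring (gen_ring P)"
  unfolding normal_ring_def
proof (intro ballI impI)
  fix A B
  assume A: "A \<in> carrier (gen_ring P)" and B: "B \<in> carrier (gen_ring P)"
    and AB: "A \<otimes>\<^bsub>gen_ring P\<^esub> B = \<zero>\<^bsub>gen_ring P\<^esub>"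
  obtain a where a: "a \<in> EM P" "A = cls P a" using A by (rule gen_ring_carrierE)
  obtain b where b: "b \<in> EM P" "B = cls P b" using B by (rule gen_ring_carrierE)
  have "cls P (\<lambda>x. a x * b x) = cls P (\<lambda>_. 0)"
    using AB a b by (simp only: mult_cls zero_gen_ring)
  then have ab: "negligible (\<lambda>x. a x * b x)"
    using a(1) b(1) EM_mult EM_const cls_eq_iff negl_equiv_zero_iff by metis
  then have ba: "negligible (\<lambda>x. b x * a x)"
    by (simp add: mult.commute)
  have weights: "weight a b \<in> EM P" "weight b a \<in> EM P"
    using a(1) b(1) closed_weight moderate_weight by (simp_all add: EM_def)
  show "carrier (gen_ring P) =
    {x \<oplus>\<^bsub>gen_ring P\<^esub> y |x y. x \<in> Ann (gen_ring P) A \<and> y \<in> Ann (gen_ring P) B}"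
  proof (intro equalityI subsetI)
    fix T assume "T \<in> carrier (gen_ring P)"
    then obtain t where t: "t \<in> EM P" "T = cls P t" by (rule gen_ring_carrierE)
    have "T = cls P (\<lambda>x. t x * weight a b x) \<oplus>\<^bsub>gen_ring P\<^esub> cls P (\<lambda>x. t x * weight b a x)"
      using t weights by (simp add: add_cls EM_mult distrib_left[symmetric] weight_sum)
    moreover have "cls P (\<lambda>x. t x * weight a b x) \<in> Ann (gen_ring P) A"
      "cls P (\<lambda>x. t x * weight b a x) \<in> Ann (gen_ring P) B"
      using a b t(1) weights ab ba by (simp_all add: cls_mult_weight_in_Ann)
    ultimately show "T \<in> {x \<oplus>\<^bsub>gen_ring P\<^esub> y |x y. x \<in> Ann (gen_ring P) A \<and> y \<in> Ann (gen_ring P) B}"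
      by blast
  qed (auto simp: Ann_def add_cls EM_add elim!: gen_ring_carrierE)
qed

end

section \<open>The lattice order\<close>

text \<open>This is what the order needs beyond a ring structure: when the positive part of
  \<open>a - b\<close> is negligible, such a \<open>u\<close> is a representative of the class of \<open>b\<close> lying above \<open>a\<close>.\<close>

definition max_approximable :: "((real \<Rightarrow> real) \<Rightarrow> bool) \<Rightarrow> bool" where
  "max_approximable P \<longleftrightarrow> (\<forall>a\<in>EM P. \<forall>b\<in>EM P. \<exists>u\<in>EM P.
     (\<forall>x\<in>I. max (a x) (b x) \<le> u x) \<and> u \<simeq> (\<lambda>x. max (a x) (b x)))"

definition lifts_pointwise ::
  "((real \<Rightarrow> real) \<Rightarrow> bool) \<Rightarrow> (real \<Rightarrow> real \<Rightarrow> real) \<Rightarrow>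
    ((real \<Rightarrow> real) set \<Rightarrow> (real \<Rightarrow> real) set \<Rightarrow> (real \<Rightarrow> real) set) \<Rightarrow> bool" where
  "lifts_pointwise P op F \<longleftrightarrow> (\<forall>A\<in>EM P // nrel P. \<forall>B\<in>EM P // nrel P.
     F A B \<in> EM P // nrel P \<and> rep (F A B) \<simeq> (\<lambda>x. op (rep A x) (rep B x)))"

lemma lifts_pointwise_cls:
  assumes "\<And>f g. f \<in> EM P \<Longrightarrow> g \<in> EM P \<Longrightarrow> (\<lambda>x. op (f x) (g x)) \<in> EM P"
  shows "lifts_pointwise P op (\<lambda>A B. cls P (\<lambda>x. op (rep A x) (rep B x)))"
  using assms unfolding lifts_pointwise_def by (simp add: cls_in_quotient rep_cls rep_EM)

lemma lifts_pointwise_gen_meet: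
  "(\<And>f g. f \<in> EM P \<Longrightarrow> g \<in> EM P \<Longrightarrow> (\<lambda>x. min (f x) (g x)) \<in> EM P) \<Longrightarrow>
    lifts_pointwise P min (gen_meet P)"
  using lifts_pointwise_cls[of P min] by (simp add: gen_meet_def[abs_def])

lemma lifts_pointwise_gen_join:
  "(\<And>f g. f \<in> EM P \<Longrightarrow> g \<in> EM P \<Longrightarrow> (\<lambda>x. max (f x) (g x)) \<in> EM P) \<Longrightarrow>
    lifts_pointwise P max (gen_join P)"
  using lifts_pointwise_cls[of P max] by (simp add: gen_join_def[abs_def])

lemma lifts_pointwise_cls_eq:
  assumes F: "lifts_pointwise P op F"
    and op: "\<And>a b a' b'. \<bar>op a b - op a' b'\<bar> \<le> \<bar>a - a'\<bar> + \<bar>b - b'\<bar>"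
    and rsu: "r \<in> EM P" "s \<in> EM P" "u \<in> EM P" and u: "u \<simeq> (\<lambda>x. op (r x) (s x))"
  shows "F (cls P r) (cls P s) = cls P u"
proof -
  have FQ: "F (cls P r) (cls P s) \<in> EM P // nrel P"
    using F rsu unfolding lifts_pointwise_def by (simp add: cls_in_quotient)
  have "rep (F (cls P r) (cls P s)) \<simeq> (\<lambda>x. op (rep (cls P r) x) (rep (cls P s) x))"
    using F rsu unfolding lifts_pointwise_def by (simp add: cls_in_quotient)
  also have "\<dots> \<simeq> (\<lambda>x. op (r x) (s x))"
    using rsu by (intro negl_equiv_lipschitz[OF op] rep_cls)
  also have "\<dots> \<simeq> u"
    using u by (rule negl_equiv_sym)
  finally show ?thesis
    using FQ rsu(3) by (metis cls_eq_iff cls_rep rep_EM)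
qed

lemma neg_part_mult_le: "max 0 (0 - p * q) \<le> max 0 (- q) * \<bar>p\<bar> + max 0 (- p) * \<bar>q\<bar>" for p q :: real
  by (cases "0 \<le> p"; cases "0 \<le> q") (auto simp: max_def abs_if mult_le_0_iff zero_le_mult_iff)

lemma min_mult_neg_part: "\<bar>min a b * t - min (a * t) (b * t)\<bar> \<le> \<bar>a - b\<bar> * max 0 (- t)" for a b t :: real
proof (cases "0 \<le> t")
  case False
  then have "\<bar>min a b * t - min (a * t) (b * t)\<bar> = \<bar>a * t - b * t\<bar>"
    by (simp add: min_mult_distrib_right max_def min_def abs_minus_commute)
  also have "\<dots> = \<bar>a - b\<bar> * max 0 (- t)"
    using False by (simp add: left_diff_distrib[symmetric] abs_mult)
  finally show ?thesis by simp
qed (simp add: min_mult_distrib_right)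

lemma negl_equiv_min_mult:
  assumes "moderate a" "moderate b" "negligible (\<lambda>x. max 0 (0 - t x))"
  shows "(\<lambda>x. min (a x) (b x) * t x) \<simeq> (\<lambda>x. min (a x * t x) (b x * t x))"
proof -
  have "negligible (\<lambda>x. max 0 (0 - t x) * \<bar>a x - b x\<bar>)"
    using assms by (intro negligible_mult_moderate) (simp_all add: moderate_abs moderate_diff)
  then show ?thesis
    unfolding negl_equiv_def
  proof (rule negligible_mono, intro always_eventually allI)
    fix x
    show "\<bar>min (a x) (b x) * t x - min (a x * t x) (b x * t x)\<bar> \<le> \<bar>max 0 (0 - t x) * \<bar>a x - b x\<bar>\<bar>"
      using min_mult_neg_part[of "a x" "b x" "t x"] by (simp add: mult.commute)
  qed
qed

locale lattice_net_algebra = net_algebra +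
  assumes approx_max: "max_approximable P"
begin

lemma gen_le_iff:
  assumes A: "A \<in> carrier (gen_ring P)" and B: "B \<in> carrier (gen_ring P)"
    and a: "a \<in> A" and b: "b \<in> B"
  shows "gen_le P A B \<longleftrightarrow> negligible (\<lambda>x. max 0 (a x - b x))"
proof
  assume "gen_le P A B"
  then obtain r s where rs: "r \<in> A" "s \<in> B" "\<forall>x\<in>I. r x \<le> s x"
    unfolding gen_le_def by blast
  have "a \<simeq> r" "s \<simeq> b"
    using A B a b rs quotient_negl_equiv by (auto simp: carrier_gen_ring)
  then have "negligible (\<lambda>x. \<bar>a x - r x\<bar> + \<bar>s x - b x\<bar>)"
    unfolding negl_equiv_def by (intro negligible_add) (simp_all add: negligible_abs)
  then show "negligible (\<lambda>x. max 0 (a x - b x))"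
    by (rule negligible_mono_on_I) (use rs(3) in force)
next
  assume pos: "negligible (\<lambda>x. max 0 (a x - b x))"
  have ab: "a \<in> EM P" "b \<in> EM P"
    using A B a b quotient_eq_cls by (auto simp: carrier_gen_ring)
  then obtain u where u: "u \<in> EM P" "\<forall>x\<in>I. max (a x) (b x) \<le> u x" "u \<simeq> (\<lambda>x. max (a x) (b x))"
    using approx_max unfolding max_approximable_def by blast
  have "(\<lambda>x. max (a x) (b x)) \<simeq> b"
    using pos unfolding negl_equiv_def by (simp add: max_diff_distrib_left max.commute)
  with u(3) have "b \<simeq> u" by (blast intro: negl_equiv_trans negl_equiv_sym)
  then have "u \<in> B"
    using B b ab(2) u(1) quotient_eq_cls[of B P b] by (simp add: carrier_gen_ring mem_cls)
  then show "gen_le P A B"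
    unfolding gen_le_def using a u(2) by force
qed

lemma gen_le_rep_iff:
  "A \<in> carrier (gen_ring P) \<Longrightarrow> B \<in> carrier (gen_ring P) \<Longrightarrow>
    gen_le P A B \<longleftrightarrow> negligible (\<lambda>x. max 0 (rep A x - rep B x))"
  by (rule gen_le_iff) (simp_all add: carrier_gen_ring rep_in)

lemma gen_le_refl: "A \<in> carrier (gen_ring P) \<Longrightarrow> gen_le P A A"
  unfolding gen_le_def carrier_gen_ring using rep_in by blast

lemma gen_le_antisym:
  assumes A: "A \<in> carrier (gen_ring P)" and B: "B \<in> carrier (gen_ring P)"
    and "gen_le P A B" "gen_le P B A"
  shows "A = B"
proof -
  have "negligible (\<lambda>x. max 0 (rep A x - rep B x) - max 0 (rep B x - rep A x))"
    using assms by (intro negligible_diff) (simp_all add: gen_le_rep_iff)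
  then have "rep A \<simeq> rep B"
    unfolding negl_equiv_def by (rule back_subst[where P = negligible]) (auto simp: max_def)
  then show ?thesis
    using A B by (metis carrier_gen_ring cls_eq_iff cls_rep rep_EM)
qed

lemma gen_le_trans:
  assumes "A \<in> carrier (gen_ring P)" "B \<in> carrier (gen_ring P)" "C \<in> carrier (gen_ring P)"
    and "gen_le P A B" "gen_le P B C"
  shows "gen_le P A C"
  using assms by (simp add: gen_le_rep_iff)
    (erule negligible_pos_part_le_sum, assumption, simp)

lemma gen_le_add_right:
  assumes "A \<in> carrier (gen_ring P)" "B \<in> carrier (gen_ring P)" "Z \<in> carrier (gen_ring P)"
    and "gen_le P A B"
  shows "gen_le P (A \<oplus>\<^bsub>gen_ring P\<^esub> Z) (B \<oplus>\<^bsub>gen_ring P\<^esub> Z)"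
proof -
  obtain a b z where abz: "a \<in> EM P" "b \<in> EM P" "z \<in> EM P" "A = cls P a" "B = cls P b" "Z = cls P z"
    using assms(1-3) by (metis gen_ring_carrierE)
  then show ?thesis
    using assms(4) gen_le_iff[of A B a b]
      gen_le_iff[of "cls P (\<lambda>x. a x + z x)" "cls P (\<lambda>x. b x + z x)" "\<lambda>x. a x + z x" "\<lambda>x. b x + z x"]
    by (simp add: add_cls EM_add self_in_cls)
qed

lemma gen_le_zero_mult:
  assumes "A \<in> carrier (gen_ring P)" "B \<in> carrier (gen_ring P)"
    and "gen_le P \<zero>\<^bsub>gen_ring P\<^esub> A" "gen_le P \<zero>\<^bsub>gen_ring P\<^esub> B"
  shows "gen_le P \<zero>\<^bsub>gen_ring P\<^esub> (A \<otimes>\<^bsub>gen_ring P\<^esub> B)"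
proof -
  obtain a b where ab: "a \<in> EM P" "b \<in> EM P" "A = cls P a" "B = cls P b"
    using assms(1,2) by (metis gen_ring_carrierE)
  have zero: "\<zero>\<^bsub>gen_ring P\<^esub> \<in> carrier (gen_ring P)" "(\<lambda>_. 0) \<in> \<zero>\<^bsub>gen_ring P\<^esub>"
    by (simp_all add: zero_gen_ring EM_const self_in_cls)
  have "negligible (\<lambda>x. max 0 (- a x))" "negligible (\<lambda>x. max 0 (- b x))"
    using assms zero ab gen_le_iff[of "\<zero>\<^bsub>gen_ring P\<^esub>" A "\<lambda>_. 0" a]
      gen_le_iff[of "\<zero>\<^bsub>gen_ring P\<^esub>" B "\<lambda>_. 0" b]
    by (simp_all add: self_in_cls)
  with ab(1,2) have "negligible (\<lambda>x. max 0 (- b x) * \<bar>a x\<bar> + max 0 (- a x) * \<bar>b x\<bar>)"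
    by (intro negligible_add negligible_mult_moderate) (auto simp: EM_def moderate_abs)
  then have "negligible (\<lambda>x. max 0 (0 - a x * b x))"
    by (rule negligible_mono_nonneg) (simp, rule neg_part_mult_le)
  then show ?thesis
    using zero ab gen_le_iff[of "\<zero>\<^bsub>gen_ring P\<^esub>" "cls P (\<lambda>x. a x * b x)" "\<lambda>_. 0" "\<lambda>x. a x * b x"]
    by (simp add: mult_cls EM_mult self_in_cls)
qed

lemma lifts_pointwiseD:
  assumes "lifts_pointwise P op F" "A \<in> carrier (gen_ring P)" "B \<in> carrier (gen_ring P)"
  shows "F A B \<in> carrier (gen_ring P)" "rep (F A B) \<simeq> (\<lambda>x. op (rep A x) (rep B x))"
  using assms by (auto simp: lifts_pointwise_def carrier_gen_ring)

context
  fixes mt :: "(real \<Rightarrow> real) set \<Rightarrow> (real \<Rightarrow> real) set \<Rightarrow> (real \<Rightarrow> real) set"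
  assumes mt: "lifts_pointwise P min mt"
begin

lemma meet_le:
  assumes A: "A \<in> carrier (gen_ring P)" and B: "B \<in> carrier (gen_ring P)"
  shows "gen_le P (mt A B) A" "gen_le P (mt A B) B"
proof -
  note m = lifts_pointwiseD[OF mt A B]
  have n: "negligible (\<lambda>x. max 0 (rep (mt A B) x - min (rep A x) (rep B x)))"
    using m(2) unfolding negl_equiv_def by (rule negligible_pos_part)
  show "gen_le P (mt A B) A" "gen_le P (mt A B) B"
    using A B m(1) by (simp_all add: gen_le_rep_iff negligible_pos_part_mono[OF n])
qed

lemma le_meet:
  assumes A: "A \<in> carrier (gen_ring P)" and B: "B \<in> carrier (gen_ring P)"
    and Z: "Z \<in> carrier (gen_ring P)" and "gen_le P Z A" "gen_le P Z B"
  shows "gen_le P Z (mt A B)"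
proof -
  note m = lifts_pointwiseD[OF mt A B]
  have "negligible (\<lambda>x. max 0 (min (rep A x) (rep B x) - rep (mt A B) x))"
    using negl_equiv_sym[OF m(2)] unfolding negl_equiv_def by (rule negligible_pos_part)
  moreover have "negligible (\<lambda>x. max 0 (rep Z x - min (rep A x) (rep B x)))"
    using assms by (simp add: gen_le_rep_iff) (erule negligible_pos_part_le_sum, assumption, simp)
  ultimately show ?thesis
    using Z m(1) by (simp add: gen_le_rep_iff) (erule negligible_pos_part_le_sum, assumption, simp)
qed

lemma meet_mult_nonneg:
  assumes A: "A \<in> carrier (gen_ring P)" and B: "B \<in> carrier (gen_ring P)"
    and T: "T \<in> carrier (gen_ring P)" and T_nonneg: "gen_le P \<zero>\<^bsub>gen_ring P\<^esub> T"
  shows "mt A B \<otimes>\<^bsub>gen_ring P\<^esub> T = mt (A \<otimes>\<^bsub>gen_ring P\<^esub> T) (B \<otimes>\<^bsub>gen_ring P\<^esub> T)"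
proof -
  define a b t m where "a = rep A" "b = rep B" "t = rep T" "m = rep (mt A B)"
  note m = lifts_pointwiseD[OF mt A B]
  have E: "a \<in> EM P" "b \<in> EM P" "t \<in> EM P" "m \<in> EM P"
    using A B T m(1) by (simp_all add: a_b_t_m_def carrier_gen_ring rep_EM)
  have cls: "A = cls P a" "B = cls P b" "T = cls P t" "mt A B = cls P m"
    using A B T m(1) by (simp_all add: a_b_t_m_def carrier_gen_ring cls_rep)
  have "negligible (\<lambda>x. max 0 (0 - t x))"
    using T_nonneg T gen_le_iff[of "\<zero>\<^bsub>gen_ring P\<^esub>" T "\<lambda>_. 0" t]
    by (simp add: zero_gen_ring EM_const self_in_cls cls_in_quotient a_b_t_m_def carrier_gen_ring rep_in)
  with E have "(\<lambda>x. min (a x) (b x) * t x) \<simeq> (\<lambda>x. min (a x * t x) (b x * t x))"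
    by (intro negl_equiv_min_mult) (simp_all add: EM_def)
  moreover have "(\<lambda>x. m x * t x) \<simeq> (\<lambda>x. min (a x) (b x) * t x)"
    using m(2) E by (intro negl_equiv_mult) (simp_all add: a_b_t_m_def EM_def)
  ultimately have "(\<lambda>x. m x * t x) \<simeq> (\<lambda>x. min (a x * t x) (b x * t x))"
    by (rule negl_equiv_trans[rotated])
  then have "mt (cls P (\<lambda>x. a x * t x)) (cls P (\<lambda>x. b x * t x)) = cls P (\<lambda>x. m x * t x)"
    using E by (intro lifts_pointwise_cls_eq[OF mt min_lipschitz] EM_mult)
  then show ?thesis
    using cls E by (simp add: mult_cls)
qed

end

context
  fixes jn :: "(real \<Rightarrow> real) set \<Rightarrow> (real \<Rightarrow> real) set \<Rightarrow> (real \<Rightarrow> real) set"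
  assumes jn: "lifts_pointwise P max jn"
begin

lemma le_join:
  assumes A: "A \<in> carrier (gen_ring P)" and B: "B \<in> carrier (gen_ring P)"
  shows "gen_le P A (jn A B)" "gen_le P B (jn A B)"
proof -
  note j = lifts_pointwiseD[OF jn A B]
  have n: "negligible (\<lambda>x. max 0 (max (rep A x) (rep B x) - rep (jn A B) x))"
    using negl_equiv_sym[OF j(2)] unfolding negl_equiv_def by (rule negligible_pos_part)
  show "gen_le P A (jn A B)" "gen_le P B (jn A B)"
    using A B j(1) by (simp_all add: gen_le_rep_iff negligible_pos_part_mono[OF n])
qed

lemma join_le:
  assumes A: "A \<in> carrier (gen_ring P)" and B: "B \<in> carrier (gen_ring P)"
    and Z: "Z \<in> carrier (gen_ring P)" and "gen_le P A Z" "gen_le P B Z"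
  shows "gen_le P (jn A B) Z"
proof -
  note j = lifts_pointwiseD[OF jn A B]
  have "negligible (\<lambda>x. max 0 (rep (jn A B) x - max (rep A x) (rep B x)))"
    using j(2) unfolding negl_equiv_def by (rule negligible_pos_part)
  moreover have "negligible (\<lambda>x. max 0 (max (rep A x) (rep B x) - rep Z x))"
    using assms by (simp add: gen_le_rep_iff) (erule negligible_pos_part_le_sum, assumption, simp)
  ultimately show ?thesis
    using Z j(1) by (simp add: gen_le_rep_iff) (erule negligible_pos_part_le_sum, assumption, simp)
qed

end

theorem f_ring_gen_ring:
  assumes mt: "lifts_pointwise P min mt" and jn: "lifts_pointwise P max jn"
  shows "f_ring (gen_ring P) (gen_le P) mt jn"
  unfolding f_ring_def lattice_ordered_ring_def
proof (intro conjI ballI impI)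
  show "cring (gen_ring P)" by (rule cring_gen_ring)
  then show "ring (gen_ring P)" by (rule cring.axioms(1))
qed (simp_all add: gen_le_refl gen_le_antisym gen_le_add_right gen_le_zero_mult
    lifts_pointwiseD[OF mt] meet_le[OF mt] le_meet[OF mt] meet_mult_nonneg[OF mt]
    lifts_pointwiseD[OF jn] le_join[OF jn] join_le[OF jn], (blast intro: gen_le_trans)+)

theorem reduced_normal_f_ring_gen_ring:
  assumes "\<And>r s. P r \<Longrightarrow> P s \<Longrightarrow> P (weight r s)"
    and "lifts_pointwise P min mt" "lifts_pointwise P max jn"
  shows "reduced_normal_f_ring (gen_ring P) (gen_le P) mt jn"
  unfolding reduced_normal_f_ring_def
  using f_ring_gen_ring reduced_gen_ring normal_gen_ring assms by blast

end

section \<open>Smooth nets\<close>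

definition derivative_closed :: "(real \<Rightarrow> real) set \<Rightarrow> bool" where
  "derivative_closed F \<longleftrightarrow> (\<forall>g\<in>F. \<exists>g'\<in>F. \<forall>x\<in>I. (g has_real_derivative g' x) (at x within I))"

lemma smooth_net_if_derivative_closed:
  assumes F: "derivative_closed F" and r: "r \<in> F"
  shows "smooth_net r"
proof -
  obtain d where d: "\<And>g. g \<in> F \<Longrightarrow> d g \<in> F \<and> (\<forall>x\<in>I. (g has_real_derivative d g x) (at x within I))"
    using F unfolding derivative_closed_def by metis
  have "(d ^^ k) r \<in> F" for k
    by (induction k) (simp_all add: r d)
  then show ?thesis
    unfolding smooth_net_def using d by (intro exI[of _ "\<lambda>k. (d ^^ k) r"]) simp
qed

lemma derivative_closed_smooth_net: "derivative_closed {f. smooth_net f}"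
  unfolding derivative_closed_def
proof
  fix g assume "g \<in> {f. smooth_net f}"
  then obtain D where D: "D 0 = g" "\<forall>k. \<forall>x\<in>I. (D k has_real_derivative D (Suc k) x) (at x within I)"
    unfolding smooth_net_def by blast
  then have "smooth_net (D 1)"
    unfolding smooth_net_def by (intro exI[of _ "\<lambda>k. D (Suc k)"]) simp
  then show "\<exists>g'\<in>{f. smooth_net f}. \<forall>x\<in>I. (g has_real_derivative g' x) (at x within I)"
    using D by (intro bexI[of _ "D 1"]) auto
qed

inductive_set alg_hull :: "(real \<Rightarrow> real) set \<Rightarrow> (real \<Rightarrow> real) set" for B where
  base: "g \<in> B \<Longrightarrow> g \<in> alg_hull B"
| const: "(\<lambda>_. c) \<in> alg_hull B"
| add: "f \<in> alg_hull B \<Longrightarrow> g \<in> alg_hull B \<Longrightarrow> (\<lambda>x. f x + g x) \<in> alg_hull B"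
| mult: "f \<in> alg_hull B \<Longrightarrow> g \<in> alg_hull B \<Longrightarrow> (\<lambda>x. f x * g x) \<in> alg_hull B"

lemma derivative_closed_alg_hull:
  assumes "\<forall>g\<in>B. \<exists>g'\<in>alg_hull B. \<forall>x\<in>I. (g has_real_derivative g' x) (at x within I)"
  shows "derivative_closed (alg_hull B)"
  unfolding derivative_closed_def
proof
  fix g assume "g \<in> alg_hull B"
  then show "\<exists>g'\<in>alg_hull B. \<forall>x\<in>I. (g has_real_derivative g' x) (at x within I)"
  proof induction
    case (base g)
    then show ?case using assms by blast
  next
    case (const c)
    show ?case by (intro bexI[of _ "\<lambda>_. 0"] alg_hull.const) auto
  next
    case (add f g)
    then obtain f' g' where "f' \<in> alg_hull B" "g' \<in> alg_hull B"
      and "\<forall>x\<in>I. (f has_real_derivative f' x) (at x within I)"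
        "\<forall>x\<in>I. (g has_real_derivative g' x) (at x within I)" by blast
    then show ?case
      by (intro bexI[of _ "\<lambda>x. f' x + g' x"]) (auto intro: alg_hull.add DERIV_add)
  next
    case (mult f g)
    then obtain f' g' where "f' \<in> alg_hull B" "g' \<in> alg_hull B"
      and f': "\<forall>x\<in>I. (f has_real_derivative f' x) (at x within I)"
      and g': "\<forall>x\<in>I. (g has_real_derivative g' x) (at x within I)" by blast
    moreover have "((\<lambda>x. f x * g x) has_real_derivative f' x * g x + f x * g' x) (at x within I)"
      if "x \<in> I" for x
      using DERIV_mult[OF f'[rule_format, OF that] g'[rule_format, OF that]] by (simp add: mult.commute)
    ultimately show ?case
      using mult by (intro bexI[of _ "\<lambda>x. f' x * g x + f x * g' x"]) (auto intro: alg_hull.add alg_hull.mult)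
  qed
qed

lemma smooth_net_alg_hull:
  assumes "\<forall>g\<in>B. \<exists>g'\<in>alg_hull ({f. smooth_net f} \<union> B). \<forall>x\<in>I. (g has_real_derivative g' x) (at x within I)"
    and "f \<in> alg_hull ({f. smooth_net f} \<union> B)"
  shows "smooth_net f"
proof (rule smooth_net_if_derivative_closed[OF derivative_closed_alg_hull assms(2)], intro ballI)
  fix g assume g: "g \<in> {f. smooth_net f} \<union> B"
  show "\<exists>g'\<in>alg_hull ({f. smooth_net f} \<union> B). \<forall>x\<in>I. (g has_real_derivative g' x) (at x within I)"
  proof (cases "g \<in> B")
    case False
    with g derivative_closed_smooth_net obtain g' where
      "smooth_net g'" "\<forall>x\<in>I. (g has_real_derivative g' x) (at x within I)"
      unfolding derivative_closed_def by blast
    then show ?thesis by (intro bexI[of _ g'] alg_hull.base) auto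
  qed (use assms(1) in blast)
qed

lemma smooth_net_const: "smooth_net (\<lambda>_. c)"
  and smooth_net_add: "smooth_net f \<Longrightarrow> smooth_net g \<Longrightarrow> smooth_net (\<lambda>x. f x + g x)"
  and smooth_net_mult: "smooth_net f \<Longrightarrow> smooth_net g \<Longrightarrow> smooth_net (\<lambda>x. f x * g x)"
  by (rule smooth_net_alg_hull[of "{}"]; auto intro: alg_hull.intros)+

interpretation smooth: net_algebra smooth_net
  by unfold_locales (simp_all add: smooth_net_const smooth_net_add smooth_net_mult)

lemma inverse_derivative_in_alg_hull:
  assumes h: "smooth_net h" and h0: "\<And>x. x \<in> I \<Longrightarrow> h x \<noteq> 0" and inv: "(\<lambda>x. inverse (h x)) \<in> B"
  shows "\<exists>g'\<in>alg_hull ({f. smooth_net f} \<union> B).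
    \<forall>x\<in>I. ((\<lambda>x. inverse (h x)) has_real_derivative g' x) (at x within I)"
proof -
  obtain h' where h': "smooth_net h'" "\<forall>x\<in>I. (h has_real_derivative h' x) (at x within I)"
    using derivative_closed_smooth_net h unfolding derivative_closed_def by blast
  let ?g = "\<lambda>x. ((\<lambda>_. -1) x * h' x) * (inverse (h x) * inverse (h x))"
  have "?g \<in> alg_hull ({f. smooth_net f} \<union> B)"
    using h' inv by (intro alg_hull.mult alg_hull.const) (auto intro: alg_hull.base)
  moreover have "\<forall>x\<in>I. ((\<lambda>x. inverse (h x)) has_real_derivative ?g x) (at x within I)"
  proof
    fix x assume x: "x \<in> I"
    note D = DERIV_inverse_fun[OF h'(2)[rule_format, OF x] h0[OF x]]
    show "((\<lambda>x. inverse (h x)) has_real_derivative ?g x) (at x within I)"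
      by (rule DERIV_cong[OF D]) (simp add: power2_eq_square)
  qed
  ultimately show ?thesis by (rule bexI[of _ ?g, rotated])
qed

lemma smooth_net_inverse:
  assumes "smooth_net h" "\<And>x. x \<in> I \<Longrightarrow> h x \<noteq> 0"
  shows "smooth_net (\<lambda>x. inverse (h x))"
proof (rule smooth_net_alg_hull[of "{\<lambda>x. inverse (h x)}"])
  show "\<forall>g\<in>{\<lambda>x. inverse (h x)}. \<exists>g'\<in>alg_hull ({f. smooth_net f} \<union> {\<lambda>x. inverse (h x)}).
      \<forall>x\<in>I. (g has_real_derivative g' x) (at x within I)"
    using inverse_derivative_in_alg_hull[OF assms, of "{\<lambda>x. inverse (h x)}"] by simp
qed (auto intro: alg_hull.base)

lemma inverse_sqrt_eq: "y > 0 \<Longrightarrow> inverse (sqrt y) = sqrt y * inverse y"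
  using sqrt_divide_self_eq[of y] by (simp add: divide_inverse)

lemma smooth_net_sqrt:
  assumes h: "smooth_net h" and pos: "\<And>x. x \<in> I \<Longrightarrow> h x > 0"
  shows "smooth_net (\<lambda>x. sqrt (h x))"
proof (rule smooth_net_alg_hull[of "{\<lambda>x. sqrt (h x), \<lambda>x. inverse (h x)}"])
  let ?A = "alg_hull ({f. smooth_net f} \<union> {\<lambda>x. sqrt (h x), \<lambda>x. inverse (h x)})"
  obtain h' where h': "smooth_net h'" "\<forall>x\<in>I. (h has_real_derivative h' x) (at x within I)"
    using derivative_closed_smooth_net h unfolding derivative_closed_def by blast
  let ?g = "\<lambda>x. ((\<lambda>_. 1 / 2) x * h' x) * (sqrt (h x) * inverse (h x))"
  have "?g \<in> ?A"
    by (intro alg_hull.mult alg_hull.const; rule alg_hull.base) (simp_all add: h'(1))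
  moreover have "\<forall>x\<in>I. ((\<lambda>x. sqrt (h x)) has_real_derivative ?g x) (at x within I)"
  proof
    fix x assume x: "x \<in> I"
    note D = DERIV_chain'[OF h'(2)[rule_format, OF x] DERIV_real_sqrt[OF pos[OF x]]]
    show "((\<lambda>x. sqrt (h x)) has_real_derivative ?g x) (at x within I)"
      by (rule DERIV_cong[OF D]) (simp add: inverse_sqrt_eq[OF pos[OF x]])
  qed
  ultimately have "\<exists>g'\<in>?A. \<forall>x\<in>I. ((\<lambda>x. sqrt (h x)) has_real_derivative g' x) (at x within I)"
    by (rule bexI[of _ ?g, rotated])
  moreover have "\<exists>g'\<in>?A. \<forall>x\<in>I. ((\<lambda>x. inverse (h x)) has_real_derivative g' x) (at x within I)"
    using pos by (intro inverse_derivative_in_alg_hull[OF h]) (simp_all add: less_imp_neq[symmetric])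
  ultimately show "\<forall>g\<in>{\<lambda>x. sqrt (h x), \<lambda>x. inverse (h x)}.
      \<exists>g'\<in>?A. \<forall>x\<in>I. (g has_real_derivative g' x) (at x within I)"
    by (intro ballI) (erule insertE; simp)
qed (auto intro: alg_hull.base)

lemma smooth_net_flat: "smooth_net flat"
proof (rule smooth_net_alg_hull[of "{flat, \<lambda>x. inverse x}"])
  let ?A = "alg_hull ({f. smooth_net f} \<union> {flat, \<lambda>x. inverse x})"
  have "smooth_net (\<lambda>x. x)"
    by (rule smooth_net_alg_hull[of "{\<lambda>x. x}"]) (auto intro!: bexI[of _ "\<lambda>_. 1"] intro: alg_hull.intros)
  then have inv: "\<exists>g'\<in>?A. \<forall>x\<in>I. ((\<lambda>x. inverse x) has_real_derivative g' x) (at x within I)"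
    by (rule inverse_derivative_in_alg_hull) (auto simp: I_def)
  have "(\<lambda>x. flat x * (inverse x * inverse x)) \<in> ?A"
    by (intro alg_hull.mult; rule alg_hull.base) simp_all
  moreover have "\<forall>x\<in>I. (flat has_real_derivative flat x * (inverse x * inverse x)) (at x within I)"
  proof
    fix x assume "x \<in> I"
    then have "x \<noteq> 0" by (simp add: I_def)
    note D = DERIV_chain'[OF DERIV_minus[OF DERIV_inverse[OF this]] DERIV_exp]
    show "(flat has_real_derivative flat x * (inverse x * inverse x)) (at x within I)"
      unfolding flat_def by (rule DERIV_cong[OF D]) (simp add: power2_eq_square)
  qed
  ultimately have "\<exists>g'\<in>?A. \<forall>x\<in>I. (flat has_real_derivative g' x) (at x within I)"
    by (rule bexI[of _ "\<lambda>x. flat x * (inverse x * inverse x)", rotated])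
  with inv show "\<forall>g\<in>{flat, \<lambda>x. inverse x}. \<exists>g'\<in>?A. \<forall>x\<in>I. (g has_real_derivative g' x) (at x within I)"
    by (intro ballI) (erule insertE; simp)
qed (auto intro: alg_hull.base)

lemma smooth_net_weight:
  assumes "smooth_net r" "smooth_net s"
  shows "smooth_net (weight r s)"
proof -
  have den: "smooth_net (\<lambda>x. r x * r x + s x * s x + (\<lambda>_. 2) x * flat x)"
    using assms by (intro smooth_net_add smooth_net_mult smooth_net_const smooth_net_flat)
  have eq: "weight r s = (\<lambda>x. (s x * s x + flat x) * inverse (r x * r x + s x * s x + (\<lambda>_. 2) x * flat x))"
    by (simp add: weight_def fun_eq_iff power2_eq_square divide_inverse)
  show ?thesis
    unfolding eq
  proof (intro smooth_net_mult smooth_net_add smooth_net_flat smooth_net_inverse[OF den] assms)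
    show "r x * r x + s x * s x + (\<lambda>_. 2) x * flat x \<noteq> 0" for x
      using weight_denominator_pos[of r x s] by (simp add: power2_eq_square)
  qed
qed

definition soft_abs :: "(real \<Rightarrow> real) \<Rightarrow> real \<Rightarrow> real" where
  "soft_abs f x = sqrt ((f x)\<^sup>2 + flat x)"

lemma abs_le_soft_abs: "\<bar>f x\<bar> \<le> soft_abs f x"
  unfolding soft_abs_def using flat_pos[of x] by (intro real_le_rsqrt) simp

lemma soft_abs_le: "soft_abs f x \<le> \<bar>f x\<bar> + sqrt (flat x)"
  unfolding soft_abs_def using flat_pos[of x] sqrt_add_le_add_sqrt[of "(f x)\<^sup>2" "flat x"] by simp

lemma soft_abs_negl_equiv_abs: "soft_abs f \<simeq> (\<lambda>x. \<bar>f x\<bar>)"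
  unfolding negl_equiv_def
proof (rule negligible_mono_nonneg)
  show "negligible (\<lambda>x. sqrt \<bar>flat x\<bar>)"
    by (rule negligible_sqrt_abs[OF negligible_flat])
  show "0 \<le> soft_abs f x - \<bar>f x\<bar>" "soft_abs f x - \<bar>f x\<bar> \<le> sqrt \<bar>flat x\<bar>" for x
    using abs_le_soft_abs[of f x] soft_abs_le[of f x] flat_pos[of x] by simp_all
qed

lemma moderate_soft_abs:
  assumes "moderate f"
  shows "moderate (soft_abs f)"
proof -
  have "moderate (\<lambda>x. \<bar>f x\<bar> + (soft_abs f x - \<bar>f x\<bar>))"
    using assms soft_abs_negl_equiv_abs[of f] unfolding negl_equiv_def
    by (intro moderate_add[OF _ negligible_imp_moderate]) (simp_all add: moderate_abs)
  then show ?thesis by simp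
qed

lemma smooth_net_soft_abs: "smooth_net f \<Longrightarrow> smooth_net (soft_abs f)"
  unfolding soft_abs_def power2_eq_square using flat_pos
  by (intro smooth_net_sqrt smooth_net_add smooth_net_mult smooth_net_flat) (auto intro: add_nonneg_pos)

lemma max_eq_half: "max a b = 1 / 2 * (a + b + \<bar>a - b\<bar>)"
  and min_eq_half: "min a b = 1 / 2 * (a + b - \<bar>a - b\<bar>)" for a b :: real
  by (simp_all add: max_def min_def)

lemma EM_smooth_net_soft_abs: "f \<in> EM smooth_net \<Longrightarrow> soft_abs f \<in> EM smooth_net"
  by (simp add: EM_def smooth_net_soft_abs moderate_soft_abs)

lemma max_approximable_smooth_net: "max_approximable smooth_net"
  unfolding max_approximable_def
proof (intro ballI)
  fix a b assume ab: "a \<in> EM smooth_net" "b \<in> EM smooth_net"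
  define u where "u x = 1 / 2 * (a x + b x + soft_abs (\<lambda>x. a x - b x) x)" for x
  have "u \<in> EM smooth_net"
    unfolding u_def using ab
    by (intro smooth.EM_mult smooth.EM_const smooth.EM_add EM_smooth_net_soft_abs smooth.EM_diff)
  moreover have "\<forall>x\<in>I. max (a x) (b x) \<le> u x"
    using abs_le_soft_abs[of "\<lambda>x. a x - b x"] by (simp add: u_def max_eq_half)
  moreover have "u \<simeq> (\<lambda>x. max (a x) (b x))"
    unfolding u_def max_eq_half
    by (intro negl_equiv_cmult negl_equiv_add negl_equiv_refl soft_abs_negl_equiv_abs)
  ultimately show "\<exists>u\<in>EM smooth_net. (\<forall>x\<in>I. max (a x) (b x) \<le> u x) \<and> u \<simeq> (\<lambda>x. max (a x) (b x))"
    by blast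
qed

lemma smooth_min_approx:
  assumes "a \<in> EM smooth_net" "b \<in> EM smooth_net"
  shows "\<exists>u\<in>EM smooth_net. u \<simeq> (\<lambda>x. min (a x) (b x))"
proof
  let ?u = "\<lambda>x. 1 / 2 * (a x + b x - soft_abs (\<lambda>x. a x - b x) x)"
  show "?u \<in> EM smooth_net"
    using assms by (intro smooth.EM_mult smooth.EM_const smooth.EM_add smooth.EM_diff EM_smooth_net_soft_abs)
  show "?u \<simeq> (\<lambda>x. min (a x) (b x))"
    unfolding min_eq_half
    using negl_equiv_add[OF negl_equiv_refl negl_equiv_cmult[OF soft_abs_negl_equiv_abs, of "-1"], of "\<lambda>x. a x + b x"]
    by (intro negl_equiv_cmult) (simp add: algebra_simps)
qed

lemma EM_smooth_net_imp_cont_net: "f \<in> EM smooth_net \<Longrightarrow> f \<in> EM cont_net"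
  unfolding EM_def smooth_net_def cont_net_def continuous_on_eq_continuous_within
  by (auto intro: DERIV_continuous)

lemma tau_sm_cls: "u \<in> EM smooth_net \<Longrightarrow> tau_sm (cls smooth_net u) = cls cont_net u"
  unfolding tau_sm_def
  by (simp add: cls_eq_iff rep_cls EM_smooth_net_imp_cont_net rep_EM cls_in_quotient)

lemma inj_on_tau_sm: "inj_on tau_sm (carrier Rsm)"
proof (rule inj_onI)
  fix A B assume A: "A \<in> carrier Rsm" and B: "B \<in> carrier Rsm" and eq: "tau_sm A = tau_sm B"
  then have E: "rep A \<in> EM smooth_net" "rep B \<in> EM smooth_net"
    by (simp_all add: Rsm_def smooth.carrier_gen_ring rep_EM)
  with eq have "rep A \<simeq> rep B"
    by (simp add: tau_sm_def cls_eq_iff EM_smooth_net_imp_cont_net)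
  with A B E show "A = B"
    by (metis Rsm_def smooth.carrier_gen_ring cls_eq_iff cls_rep)
qed

lemma lifts_pointwise_transport:
  assumes F: "lifts_pointwise cont_net op F"
    and op: "\<And>a b a' b'. \<bar>op a b - op a' b'\<bar> \<le> \<bar>a - a'\<bar> + \<bar>b - b'\<bar>"
    and approx: "\<And>a b. a \<in> EM smooth_net \<Longrightarrow> b \<in> EM smooth_net \<Longrightarrow>
      \<exists>u\<in>EM smooth_net. u \<simeq> (\<lambda>x. op (a x) (b x))"
  shows "lifts_pointwise smooth_net op
    (\<lambda>A B. the_inv_into (carrier Rsm) tau_sm (F (tau_sm A) (tau_sm B)))"
  unfolding lifts_pointwise_def
proof (intro ballI)
  fix A B assume A: "A \<in> EM smooth_net // nrel smooth_net" and B: "B \<in> EM smooth_net // nrel smooth_net"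
  define a b where "a = rep A" "b = rep B"
  have ab: "a \<in> EM smooth_net" "b \<in> EM smooth_net"
    using A B by (simp_all add: a_b_def rep_EM)
  then obtain u where u: "u \<in> EM smooth_net" "u \<simeq> (\<lambda>x. op (a x) (b x))"
    using approx by blast
  have "F (tau_sm A) (tau_sm B) = cls cont_net u"
    unfolding tau_sm_def a_b_def[symmetric] using ab u
    by (intro lifts_pointwise_cls_eq[OF F op]) (simp_all add: EM_smooth_net_imp_cont_net)
  also have "\<dots> = tau_sm (cls smooth_net u)"
    using u(1) by (simp add: tau_sm_cls)
  finally have "F (tau_sm A) (tau_sm B) = tau_sm (cls smooth_net u)" .
  then have "the_inv_into (carrier Rsm) tau_sm (F (tau_sm A) (tau_sm B)) = cls smooth_net u"
    using u(1) by (intro the_inv_into_f_eq[OF inj_on_tau_sm])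
      (simp_all add: Rsm_def smooth.carrier_gen_ring cls_in_quotient)
  moreover have "rep (cls smooth_net u) \<simeq> (\<lambda>x. op (rep A x) (rep B x))"
    using rep_cls[OF u(1)] u(2) unfolding a_b_def by (rule negl_equiv_trans)
  ultimately show "the_inv_into (carrier Rsm) tau_sm (F (tau_sm A) (tau_sm B)) \<in> EM smooth_net // nrel smooth_net \<and>
      rep (the_inv_into (carrier Rsm) tau_sm (F (tau_sm A) (tau_sm B))) \<simeq> (\<lambda>x. op (rep A x) (rep B x))"
    using u(1) by (simp add: cls_in_quotient)
qed

lemma EM_cont_net_min: "f \<in> EM cont_net \<Longrightarrow> g \<in> EM cont_net \<Longrightarrow> (\<lambda>x. min (f x) (g x)) \<in> EM cont_net"
  and EM_cont_net_max: "f \<in> EM cont_net \<Longrightarrow> g \<in> EM cont_net \<Longrightarrow> (\<lambda>x. max (f x) (g x)) \<in> EM cont_net"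
  by (simp_all add: EM_def cont_net_def continuous_on_min continuous_on_max moderate_min moderate_max)

lemma lifts_pointwise_meet_sm: "lifts_pointwise smooth_net min meet_sm"
  unfolding meet_sm_def[abs_def]
  by (rule lifts_pointwise_transport[OF lifts_pointwise_gen_meet[OF EM_cont_net_min] min_lipschitz smooth_min_approx])

lemma lifts_pointwise_join_sm: "lifts_pointwise smooth_net max join_sm"
  unfolding join_sm_def[abs_def]
proof (rule lifts_pointwise_transport[OF lifts_pointwise_gen_join[OF EM_cont_net_max] max_lipschitz])
  show "\<exists>u\<in>EM smooth_net. u \<simeq> (\<lambda>x. max (a x) (b x))"
    if "a \<in> EM smooth_net" "b \<in> EM smooth_net" for a b
    using max_approximable_smooth_net that unfolding max_approximable_def by blast
qed

interpretation all: lattice_net_algebra all_net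
proof
  show "max_approximable all_net"
    unfolding max_approximable_def
  proof (intro ballI)
    fix a b assume "a \<in> EM all_net" "b \<in> EM all_net"
    then show "\<exists>u\<in>EM all_net. (\<forall>x\<in>I. max (a x) (b x) \<le> u x) \<and> u \<simeq> (\<lambda>x. max (a x) (b x))"
      by (intro bexI[of _ "\<lambda>x. max (a x) (b x)"]) (simp_all add: EM_def all_net_def moderate_max)
  qed
qed (simp_all add: all_net_def)

interpretation smooth: lattice_net_algebra smooth_net
  by unfold_locales (rule max_approximable_smooth_net)

lemma reduced_normal_f_ring_Rt: "reduced_normal_f_ring Rt le_t meet_t join_t"
  unfolding Rt_def le_t_def meet_t_def join_t_def
proof (rule all.reduced_normal_f_ring_gen_ring)
  show "lifts_pointwise all_net min (gen_meet all_net)"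
    by (rule lifts_pointwise_gen_meet) (simp add: EM_def all_net_def moderate_min)
  show "lifts_pointwise all_net max (gen_join all_net)"
    by (rule lifts_pointwise_gen_join) (simp add: EM_def all_net_def moderate_max)
qed (simp add: all_net_def)

lemma reduced_normal_f_ring_Rsm: "reduced_normal_f_ring Rsm le_sm meet_sm join_sm"
  unfolding Rsm_def le_sm_def
  by (rule smooth.reduced_normal_f_ring_gen_ring)
    (simp_all add: smooth_net_weight lifts_pointwise_meet_sm lifts_pointwise_join_sm)

theorem corollary4p21:
  shows "reduced_normal_f_ring Rt le_t meet_t join_t \<and> reduced_normal_f_ring Rsm le_sm meet_sm join_sm"
  using reduced_normal_f_ring_Rt reduced_normal_f_ring_Rsm by blast

end
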